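(* Let $0<\epsilon<0.5$, let $n\ge3$ and $\ell\ge3$ be integers, and let $\mathrm{ENC}_\epsilon:\mathbb{Z}_2^{n-1}\to\mathbb{Z}_2^n$ be an injective map all of whose images are $\epsilon$-balanced. Define the DNA code $$\mathcal{C}_{\ell,\epsilon}=\{\tau^{-1}(\boldsymbol{c}\|\boldsymbol{y}):\ \boldsymbol{c}\in f(\ell,n),\ \boldsymbol{y}=\mathrm{ENC}_\epsilon(\boldsymbol{x}),\ \boldsymbol{x}\in\mathbb{Z}_2^{n-1}\}\subseteq\Sigma_{\rm DNA}^n.$$ Then every codeword of $\mathcal{C}_{\ell,\epsilon}$ is TC-3-dominant (hence $3$-SSA), $\ell$-run-length limited and GC-$\epsilon$-balanced, and $|\mathcal{C}_{\ell,\epsilon}|=2^{n-1}|f(\ell,n)|$.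
   Context: $\Sigma_{\rm DNA}=\{\mathrm{A},\mathrm{T},\mathrm{C},\mathrm{G}\}$ with complement $\overline{\mathrm A}=\mathrm T$, $\overline{\mathrm T}=\mathrm A$, $\overline{\mathrm C}=\mathrm G$, $\overline{\mathrm G}=\mathrm C$; the reverse-complement of $(x_1,\dots,x_n)$ is $(\overline{x_n},\dots,\overline{x_1})$. A DNA sequence is $m$-SSA if it has no two non-overlapping blocks of consecutive symbols of length $\ge m$ that are reverse-complements of each other. A DNA sequence is TC-$m$-dominant if every block of $m$ consecutive symbols contains more than $m/2$ symbols from $\{\mathrm T,\mathrm C\}$; a binary sequence is "0"-$m$-dominant if every block of $m$ consecutive symbols contains more than $m/2$ zeros. A sequence is $\ell$-run-length limited if every maximal run of identical consecutive symbols has length at most $\ell$. $f(\ell,n)\subseteq\mathbb{Z}_2^n$ is the set of binary sequences of length $n$ that are "0"-3-dominant and $\ell$-run-length limited. A binary $\boldsymbol{d}\in\mathbb{Z}_2^n$ is $\epsilon$-balanced if $|\mathrm{wt}(\boldsymbol{d})/n-0.5|\le\epsilon$; a DNA sequence $\boldsymbol{x}$ of length $n$ is GC-$\epsilon$-balanced if $|\mathrm{wt}_{\rm GC}(\boldsymbol{x})/n-0.5|\le\epsilon$, where $\mathrm{wt}_{\rm GC}$ counts positions equal to G or C. $\tau(\mathrm T)=00$, $\tau(\mathrm C)=01$, $\tau(\mathrm A)=10$, $\tau(\mathrm G)=11$, extended symbolwise; $\boldsymbol{x}\|\boldsymbol{y}=(x_1y_1,\dots,x_ny_n)$. *)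

theory Defs
  imports Main "HOL.Real"
begin

datatype dna = A | T | C | G

fun comp :: "dna \<Rightarrow> dna" where
  "comp A = T" | "comp T = A" | "comp C = G" | "comp G = C"

definition revcomp :: "dna list \<Rightarrow> dna list" where
  "revcomp xs = rev (map comp xs)"

definition block :: "nat \<Rightarrow> nat \<Rightarrow> 'a list \<Rightarrow> 'a list" where
  "block i k xs = take k (drop i xs)"

definition SSA :: "nat \<Rightarrow> dna list \<Rightarrow> bool" where
  "SSA m xs \<longleftrightarrow> \<not> (\<exists>i j k. m \<le> k \<and> i + k \<le> j \<and> j + k \<le> length xs \<and>
       block j k xs = revcomp (block i k xs))"

definition TC_dominant :: "nat \<Rightarrow> dna list \<Rightarrow> bool" where
  "TC_dominant m xs \<longleftrightarrow> (\<forall>i. i + m \<le> length xs \<longrightarrow>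
     2 * length (filter (\<lambda>s. s = T \<or> s = C) (block i m xs)) > m)"

text \<open>Binary sequences are bool lists; False = 0, True = 1.\<close>
definition zero_dominant :: "nat \<Rightarrow> bool list \<Rightarrow> bool" where
  "zero_dominant m xs \<longleftrightarrow> (\<forall>i. i + m \<le> length xs \<longrightarrow>
     2 * length (filter (\<lambda>b. \<not> b) (block i m xs)) > m)"

definition rll :: "nat \<Rightarrow> 'a list \<Rightarrow> bool" where
  "rll l xs \<longleftrightarrow> (\<forall>i k. i + k \<le> length xs \<and> 0 < k
      \<and> (\<forall>j. i \<le> j \<and> j < i + k \<longrightarrow> xs ! j = xs ! i)
      \<and> (i = 0 \<or> xs ! (i - 1) \<noteq> xs ! i)
      \<and> (i + k = length xs \<or> xs ! (i + k) \<noteq> xs ! i)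
      \<longrightarrow> k \<le> l)"

definition f_set :: "nat \<Rightarrow> nat \<Rightarrow> bool list set" where
  "f_set l n = {c. length c = n \<and> zero_dominant 3 c \<and> rll l c}"

definition wt :: "bool list \<Rightarrow> nat" where
  "wt d = length (filter id d)"

definition eps_balanced :: "real \<Rightarrow> bool list \<Rightarrow> bool" where
  "eps_balanced \<epsilon> d \<longleftrightarrow> \<bar>real (wt d) / real (length d) - 1/2\<bar> \<le> \<epsilon>"

definition wt_GC :: "dna list \<Rightarrow> nat" where
  "wt_GC x = length (filter (\<lambda>s. s = G \<or> s = C) x)"

definition GC_balanced :: "real \<Rightarrow> dna list \<Rightarrow> bool" where
  "GC_balanced \<epsilon> x \<longleftrightarrow> \<bar>real (wt_GC x) / real (length x) - 1/2\<bar> \<le> \<epsilon>"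

fun tau :: "dna \<Rightarrow> bool \<times> bool" where
  "tau T = (False, False)" | "tau C = (False, True)"
| "tau A = (True, False)" | "tau G = (True, True)"

text \<open>tau^{-1}(c || y), the symbolwise inverse of tau on interleaved pairs.\<close>
definition tau_inv_seq :: "bool list \<Rightarrow> bool list \<Rightarrow> dna list" where
  "tau_inv_seq c y = map (inv tau) (zip c y)"

definition code :: "nat \<Rightarrow> nat \<Rightarrow> (bool list \<Rightarrow> bool list) \<Rightarrow> dna list set" where
  "code l n ENC = {tau_inv_seq c (ENC x) | c x. c \<in> f_set l n \<and> length x = n - 1}"

end

theory Submission
  imports Defs
begin

text \<open>Under \<open>\<tau>\<close> the first bit of a symbol is 0 exactly for T and C, and the second bit is 1
  exactly for G and C. Hence \<open>\<tau>\<^sup>-\<^sup>1(c \<parallel> y)\<close> inherits TC-dominance and the run-length bound from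
  \<open>c\<close> and its GC-content from \<open>y\<close>. TC-3-dominance forces 3-SSA: if two blocks are reverse
  complements, then so are a length-3 window of one and a length-3 window of the other, and
  complementation turns the TC-majority of one window into a TC-minority. Finally
  \<open>(c, x) \<mapsto> \<tau>\<^sup>-\<^sup>1(c \<parallel> ENC x)\<close> is injective, which gives the size of the code.\<close>

lemma bij_tau: "bij tau"
proof (rule bijI)
  show "inj tau"
  proof (rule injI)
    show "tau x = tau y \<Longrightarrow> x = y" for x y
      by (cases x; cases y) simp_all
  qed
  have "(a, b) = tau (if a then if b then G else A else if b then C else T)" for a b
    by (cases a; cases b) simp_all
  then show "surj tau"
    by (metis surj_def surj_pair)
qed

lemma tau_inv_tau_eq [simp]: "tau (inv tau p) = p"
  using bij_tau by (simp add: bij_is_surj surj_f_inv_f)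

lemma map_tau_tau_inv_seq: "map tau (tau_inv_seq c y) = zip c y"
  by (simp add: tau_inv_seq_def comp_def)

lemma length_tau_inv_seq: "length (tau_inv_seq c y) = min (length c) (length y)"
  by (simp add: tau_inv_seq_def)

lemma map_fst_tau_tau_inv_seq:
  "length c = length y \<Longrightarrow> map (fst \<circ> tau) (tau_inv_seq c y) = c"
  by (metis map_map map_tau_tau_inv_seq map_fst_zip)

lemma map_snd_tau_tau_inv_seq:
  "length c = length y \<Longrightarrow> map (snd \<circ> tau) (tau_inv_seq c y) = y"
  by (metis map_map map_tau_tau_inv_seq map_snd_zip)

lemma tau_inv_seq_eq_iff:
  assumes "length c = length y" "length c' = length y'" "length c = length c'"
  shows "tau_inv_seq c y = tau_inv_seq c' y' \<longleftrightarrow> c = c' \<and> y = y'"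
  using assms by (metis map_tau_tau_inv_seq zip_eq_conv)

lemma block_map: "block i m (map f xs) = map f (block i m xs)"
  by (simp add: block_def take_map drop_map)

lemma is_TC_iff_not_fst_tau: "(s = T \<or> s = C) \<longleftrightarrow> \<not> fst (tau s)"
  by (cases s) auto

lemma is_GC_iff_snd_tau: "(s = G \<or> s = C) \<longleftrightarrow> snd (tau s)"
  by (cases s) auto

lemma TC_dominant_tau_inv_seq_iff:
  assumes "length c = length y"
  shows "TC_dominant m (tau_inv_seq c y) \<longleftrightarrow> zero_dominant m c"
proof -
  let ?w = "tau_inv_seq c y"
  have "length (filter (\<lambda>s. s = T \<or> s = C) (block i m ?w))
      = length (filter (\<lambda>b. \<not> b) (block i m c))" for i
    by (subst map_fst_tau_tau_inv_seq[OF assms, symmetric])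
       (simp add: block_map is_TC_iff_not_fst_tau filter_map comp_def)
  moreover have "length ?w = length c"
    using assms by (simp add: length_tau_inv_seq)
  ultimately show ?thesis
    unfolding TC_dominant_def zero_dominant_def by simp
qed

lemma wt_GC_tau_inv_seq:
  "length c = length y \<Longrightarrow> wt_GC (tau_inv_seq c y) = wt y"
  unfolding wt_GC_def wt_def
  by (subst (2) map_snd_tau_tau_inv_seq[symmetric])
     (simp_all add: is_GC_iff_snd_tau filter_map comp_def)

lemma GC_balanced_tau_inv_seq_iff:
  "length c = length y \<Longrightarrow> GC_balanced \<epsilon> (tau_inv_seq c y) \<longleftrightarrow> eps_balanced \<epsilon> y"
  by (simp add: GC_balanced_def eps_balanced_def wt_GC_tau_inv_seq length_tau_inv_seq)

text \<open>The definition of \<open>rll\<close> only bounds maximal runs; a constant segment is bounded by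
  enlarging it step by step until it becomes maximal.\<close>

lemma rll_constant_segment_le:
  assumes "rll l xs"
  shows "i + k \<le> length xs \<Longrightarrow> 0 < k \<Longrightarrow> \<forall>j. i \<le> j \<and> j < i + k \<longrightarrow> xs ! j = xs ! i
    \<Longrightarrow> k \<le> l"
proof (induction "length xs - k" arbitrary: i k rule: less_induct)
  case less
  consider (left) "0 < i" "xs ! (i - 1) = xs ! i"
    | (right) "i + k < length xs" "xs ! (i + k) = xs ! i"
    | (maximal) "i = 0 \<or> xs ! (i - 1) \<noteq> xs ! i" "i + k = length xs \<or> xs ! (i + k) \<noteq> xs ! i"
    using less.prems(1) by (metis le_neq_implies_less neq0_conv)
  then show ?case
  proof cases
    case left
    have "\<forall>j. i - 1 \<le> j \<and> j < i - 1 + Suc k \<longrightarrow> xs ! j = xs ! (i - 1)"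
    proof (intro allI impI)
      fix j assume "i - 1 \<le> j \<and> j < i - 1 + Suc k"
      then have "j = i - 1 \<or> i \<le> j \<and> j < i + k" using left(1) by linarith
      then show "xs ! j = xs ! (i - 1)" using less.prems(3) left(2) by auto
    qed
    then have "Suc k \<le> l"
      by (intro less.hyps[of "Suc k" "i - 1"]) (use less.prems(1,2) left(1) in linarith)+
    then show ?thesis by simp
  next
    case right
    have "\<forall>j. i \<le> j \<and> j < i + Suc k \<longrightarrow> xs ! j = xs ! i"
      using less.prems(3) right(2) less_Suc_eq by auto
    then have "Suc k \<le> l"
      by (intro less.hyps[of "Suc k" i]) (use less.prems(1,2) right(1) in linarith)+
    then show ?thesis by simp
  next
    case maximal
    show ?thesis
      by (rule assms[unfolded rll_def, rule_format], intro conjI)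
        (fact less.prems(1), fact less.prems(2), fact less.prems(3), fact maximal(1), fact maximal(2))
  qed
qed

lemma rll_map_imp_rll:
  assumes "rll l (map f xs)"
  shows "rll l xs"
  unfolding rll_def
proof (intro allI impI, elim conjE)
  fix i k
  assume seg: "i + k \<le> length xs" "0 < k"
    and const: "\<forall>j. i \<le> j \<and> j < i + k \<longrightarrow> xs ! j = xs ! i"
  have map_const: "\<forall>j. i \<le> j \<and> j < i + k \<longrightarrow> map f xs ! j = map f xs ! i"
  proof (intro allI impI)
    fix j assume j: "i \<le> j \<and> j < i + k"
    then have "xs ! j = xs ! i" using const by blast
    with j seg(1) show "map f xs ! j = map f xs ! i" by simp
  qed
  show "k \<le> l"
    using rll_constant_segment_le[OF assms _ seg(2) map_const] seg(1) by simp
qed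

lemma rll_tau_inv_seq: "length c = length y \<Longrightarrow> rll l c \<Longrightarrow> rll l (tau_inv_seq c y)"
  by (rule rll_map_imp_rll[where f = "fst \<circ> tau"]) (simp add: map_fst_tau_tau_inv_seq)

lemma length_filter_TC_revcomp:
  "length (filter (\<lambda>s. s = T \<or> s = C) (revcomp xs))
     = length xs - length (filter (\<lambda>s. s = T \<or> s = C) xs)"
proof -
  have "(comp s = T \<or> comp s = C) \<longleftrightarrow> \<not> (s = T \<or> s = C)" for s
    by (cases s) auto
  then have "length (filter (\<lambda>s. s = T \<or> s = C) (revcomp xs))
      = length (filter (\<lambda>s. \<not> (s = T \<or> s = C)) xs)"
    by (simp add: revcomp_def filter_map comp_def rev_filter[symmetric])
  then show ?thesis
    using sum_length_filter_compl[of "\<lambda>s. s = T \<or> s = C" xs] by simp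
qed

lemma revcomp_block_suffix:
  assumes "block j k w = revcomp (block i k w)" "m \<le> k" "i + k \<le> length w"
  shows "block j m w = revcomp (block (i + k - m) m w)"
proof -
  have "block j m w = take m (block j k w)"
    using assms(2) by (simp add: block_def min_def)
  also have "\<dots> = revcomp (drop (k - m) (block i k w))"
    using assms(1,3) by (simp add: revcomp_def take_rev drop_map block_def)
  also have "drop (k - m) (block i k w) = block (i + k - m) m w"
    using assms(2,3) by (simp add: block_def drop_take add.commute)
  finally show ?thesis .
qed

lemma TC_dominant_imp_SSA: "TC_dominant m w \<Longrightarrow> SSA m w"
  unfolding SSA_def
proof (intro notI, elim exE conjE)
  fix i j k
  assume dom: "TC_dominant m w"
    and "m \<le> k" "i + k \<le> j" "j + k \<le> length w" "block j k w = revcomp (block i k w)"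
  then have rc: "block j m w = revcomp (block (i + k - m) m w)"
    by (intro revcomp_block_suffix) auto
  let ?tc = "\<lambda>xs. length (filter (\<lambda>s. s = T \<or> s = C) xs)"
  have "2 * ?tc (block j m w) > m" "2 * ?tc (block (i + k - m) m w) > m"
    using dom \<open>m \<le> k\<close> \<open>i + k \<le> j\<close> \<open>j + k \<le> length w\<close> unfolding TC_dominant_def by auto
  moreover have "length (block (i + k - m) m w) = m"
    using \<open>m \<le> k\<close> \<open>i + k \<le> j\<close> \<open>j + k \<le> length w\<close> by (simp add: block_def)
  ultimately show False
    unfolding rc length_filter_TC_revcomp by linarith
qed

lemma code_eq_image:
  "code l n ENC = (\<lambda>(c, x). tau_inv_seq c (ENC x)) ` (f_set l n \<times> {x. length x = n - 1})"
  unfolding code_def by auto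

lemma card_code:
  assumes len_ENC: "\<forall>x. length x = n - 1 \<longrightarrow> length (ENC x) = n"
    and inj_ENC: "inj_on ENC {x. length x = n - 1}"
  shows "card (code l n ENC) = 2 ^ (n - 1) * card (f_set l n)"
proof -
  let ?X = "{x :: bool list. length x = n - 1}"
  have "inj_on (\<lambda>(c, x). tau_inv_seq c (ENC x)) (f_set l n \<times> ?X)"
  proof (rule inj_onI, clarify)
    fix c x c' x'
    assume "c \<in> f_set l n" "length x = n - 1" "c' \<in> f_set l n" "length x' = n - 1"
      and "tau_inv_seq c (ENC x) = tau_inv_seq c' (ENC x')"
    with len_ENC have "c = c'" "ENC x = ENC x'"
      by (simp_all add: f_set_def tau_inv_seq_eq_iff)
    with inj_ENC \<open>length x = n - 1\<close> \<open>length x' = n - 1\<close> show "c = c' \<and> x = x'"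
      by (simp add: inj_on_eq_iff)
  qed
  moreover have "card ?X = 2 ^ (n - 1)"
    using card_lists_length_eq[of "UNIV :: bool set" "n - 1"] by simp
  ultimately show ?thesis
    by (simp add: code_eq_image card_image card_cartesian_product)
qed

theorem theorem1:
  fixes \<epsilon> :: real and n l :: nat and ENC :: "bool list \<Rightarrow> bool list"
  assumes "0 < \<epsilon>" and "\<epsilon> < 1/2" and "n \<ge> 3" and "l \<ge> 3"
    and "\<forall>x. length x = n - 1 \<longrightarrow> length (ENC x) = n"
    and "inj_on ENC {x. length x = n - 1}"
    and "\<forall>x. length x = n - 1 \<longrightarrow> eps_balanced \<epsilon> (ENC x)"
  shows "(\<forall>w \<in> code l n ENC. TC_dominant 3 w \<and> SSA 3 w \<and> rll l w \<and> GC_balanced \<epsilon> w)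
         \<and> card (code l n ENC) = 2 ^ (n - 1) * card (f_set l n)"
proof
  show "\<forall>w \<in> code l n ENC. TC_dominant 3 w \<and> SSA 3 w \<and> rll l w \<and> GC_balanced \<epsilon> w"
  proof
    fix w assume "w \<in> code l n ENC"
    then obtain c x where w: "w = tau_inv_seq c (ENC x)" and c: "c \<in> f_set l n"
      and x: "length x = n - 1"
      unfolding code_def by blast
    have len: "length c = length (ENC x)"
      using assms(5) c x by (simp add: f_set_def)
    have "TC_dominant 3 w" "rll l w"
      using c len by (simp_all add: w f_set_def TC_dominant_tau_inv_seq_iff rll_tau_inv_seq)
    moreover have "GC_balanced \<epsilon> w"
      using assms(7) x len by (simp add: w GC_balanced_tau_inv_seq_iff)
    ultimately show "TC_dominant 3 w \<and> SSA 3 w \<and> rll l w \<and> GC_balanced \<epsilon> w"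
      by (simp add: TC_dominant_imp_SSA)
  qed
  show "card (code l n ENC) = 2 ^ (n - 1) * card (f_set l n)"
    using assms(5,6) by (rule card_code)
qed

end
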